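(* Let $k\in\mathbb{N}$. If $f\in\mathcal{L}^{(k)}$ and $v\in T^*$, then $|f(v)|\le\ell_k(|v|)\,\|f\|_k$.
   Context: $T$ is a tree (locally finite, connected, simply connected graph, identified with its vertex set) without terminal vertices, rooted at $o$. $|v|$ is the distance from $o$ to $v$; for $v\ne o$, $v^-$ is the parent of $v$. $T^*=T\setminus\{o\}$, $Df(v)=|f(v)-f(v^-)|$. For $x\ge1$: $\ell_0(x)=1$, $\ell_1(x)=1+\ln x$, $\ell_j(x)=1+\ln\ell_{j-1}(x)$ for $j\ge2$. $\mathcal{L}^{(k)}$ is the space of $f:T\to\mathbb{C}$ with $\sup_{v\in T^*}|v|\prod_{j=0}^{k-1}\ell_j(|v|)Df(v)<\infty$, and $\|f\|_k=|f(o)|+\sup_{v\in T^*}|v|\prod_{j=0}^{k-1}\ell_j(|v|)Df(v)$. *)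

theory Defs
  imports Complex_Main
begin

text \<open>A rooted tree with vertex set the type 'v, root r, given by its parent map par:
  the edges are the pairs {v, par v} for v \<noteq> r.  Every vertex reaches the root by
  iterating par (connected; acyclicity is automatic for a parent structure).\<close>

definition tree_nbrs :: "('v \<Rightarrow> 'v) \<Rightarrow> 'v \<Rightarrow> 'v \<Rightarrow> 'v set" where
  "tree_nbrs par r v = {w. w \<noteq> r \<and> par w = v} \<union> (if v = r then {} else {par v})"

definition rooted_tree :: "('v \<Rightarrow> 'v) \<Rightarrow> 'v \<Rightarrow> bool" where
  "rooted_tree par r \<longleftrightarrow>
     (\<forall>v. \<exists>n. (par ^^ n) v = r) \<and>
     (\<forall>v. finite (tree_nbrs par r v)) \<and>
     (\<forall>v. card (tree_nbrs par r v) \<noteq> 1)"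

definition depth :: "('v \<Rightarrow> 'v) \<Rightarrow> 'v \<Rightarrow> 'v \<Rightarrow> nat" where
  "depth par r v = (LEAST n. (par ^^ n) v = r)"

fun ell :: "nat \<Rightarrow> real \<Rightarrow> real" where
  "ell 0 x = 1"
| "ell (Suc 0) x = 1 + ln x"
| "ell (Suc (Suc j)) x = 1 + ln (ell (Suc j) x)"

definition Df :: "('v \<Rightarrow> 'v) \<Rightarrow> ('v \<Rightarrow> complex) \<Rightarrow> 'v \<Rightarrow> real" where
  "Df par f v = cmod (f v - f (par v))"

definition Lweight :: "nat \<Rightarrow> nat \<Rightarrow> real" where
  "Lweight k n = real n * (\<Prod>j<k. ell j (real n))"

definition Lk :: "('v \<Rightarrow> 'v) \<Rightarrow> 'v \<Rightarrow> nat \<Rightarrow> ('v \<Rightarrow> complex) set" where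
  "Lk par r k = {f. bdd_above ((\<lambda>v. Lweight k (depth par r v) * Df par f v) ` {v. v \<noteq> r})}"

definition Lk_norm :: "('v \<Rightarrow> 'v) \<Rightarrow> 'v \<Rightarrow> nat \<Rightarrow> ('v \<Rightarrow> complex) \<Rightarrow> real" where
  "Lk_norm par r k f = cmod (f r) + (SUP v\<in>{v. v \<noteq> r}. Lweight k (depth par r v) * Df par f v)"

end

theory Submission
  imports Defs
begin

text \<open>For k \<ge> 1 the function ell k is concave on [1, \<infinity>) with derivative
  1 / (x \<Prod>j<k. ell j x), so its tangent-line inequality gives
  1 / Lweight k n \<le> ell k n - ell k (n - 1) and, summing, \<Sum>i=1..n. 1 / Lweight k i \<le> ell k n.
  Along the path from v to the root, the increment of f at a vertex of depth i is at most
  M / Lweight k i, where M is the supremum part of the norm; hence |f v - f o| \<le> M ell k |v|,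
  and ell k \<ge> 1 absorbs the remaining |f o|.\<close>

lemma ell_ge_1: "1 \<le> x \<Longrightarrow> 1 \<le> ell j x"
  by (induction j x rule: ell.induct) auto

lemma ell_at_1 [simp]: "ell j 1 = 1"
  by (induction j "1::real" rule: ell.induct) auto

lemma ln_diff_ge_div:
  fixes a b :: real
  assumes "0 < a" "0 < b"
  shows "(b - a) / b \<le> ln b - ln a"
proof -
  have "ln (a / b) \<le> a / b - 1"
    using assms by (intro ln_le_minus_one) simp
  moreover have "ln (a / b) = ln a - ln b"
    using assms by (simp add: ln_div)
  moreover have "(b - a) / b = 1 - a / b"
    using assms by (simp add: field_simps)
  ultimately show ?thesis by linarith
qed

lemma ell_tangent_ineq:
  assumes "1 \<le> k" "1 \<le> a" "1 \<le> b"
  shows "(b - a) / (b * (\<Prod>j<k. ell j b)) \<le> ell k b - ell k a"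
  using assms(1)
proof (induction k rule: nat_induct_at_least)
  case base
  then show ?case
    using ln_diff_ge_div[of a b] assms by simp
next
  case (Suc k)
  then obtain k' where k': "k = Suc k'"
    using not0_implies_Suc by fastforce
  have ell_a: "1 \<le> ell k a" and ell_b: "1 \<le> ell k b"
    using assms ell_ge_1 by auto
  have "(b - a) / (b * (\<Prod>j<Suc k. ell j b)) = (b - a) / (b * (\<Prod>j<k. ell j b)) / ell k b"
    by (simp add: mult.assoc)
  also have "\<dots> \<le> (ell k b - ell k a) / ell k b"
    using Suc.IH ell_b by (intro divide_right_mono) auto
  also have "\<dots> \<le> ln (ell k b) - ln (ell k a)"
    using ln_diff_ge_div ell_a ell_b by simp
  also have "\<dots> = ell (Suc k) b - ell (Suc k) a"
    using k' by simp
  finally show ?case .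
qed

lemma Lweight_pos: "1 \<le> n \<Longrightarrow> 0 < Lweight k n"
  unfolding Lweight_def
  using ell_ge_1 by (intro mult_pos_pos prod_pos) (auto intro: less_le_trans[of 0 1])

lemma sum_inverse_Lweight_le_ell:
  assumes "1 \<le> k" "1 \<le> n"
  shows "(\<Sum>i=1..n. 1 / Lweight k i) \<le> ell k (real n)"
  using assms(2)
proof (induction n rule: nat_induct_at_least)
  case base
  then show ?case by (simp add: Lweight_def)
next
  case (Suc n)
  have "(\<Sum>i=1..Suc n. 1 / Lweight k i) = (\<Sum>i=1..n. 1 / Lweight k i) + 1 / Lweight k (Suc n)"
    by simp
  also have "\<dots> \<le> ell k (real n) + (real (Suc n) - real n) / Lweight k (Suc n)"
    using Suc.IH by simp
  also have "\<dots> \<le> ell k (real (Suc n))"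
    using ell_tangent_ineq[OF assms(1), of "real n" "real (Suc n)"] Suc.hyps
    by (simp add: Lweight_def)
  finally show ?case .
qed

lemma depth_root [simp]: "depth par r r = 0"
  unfolding depth_def by simp

lemma depth_parent:
  assumes "rooted_tree par r" "v \<noteq> r"
  shows "depth par r v = Suc (depth par r (par v))"
proof -
  obtain n where "(par ^^ n) v = r"
    using assms(1) unfolding rooted_tree_def by blast
  then have reach: "(par ^^ depth par r v) v = r"
    unfolding depth_def by (rule LeastI)
  then obtain m where m: "depth par r v = Suc m"
    using assms(2) by (cases "depth par r v") auto
  have "(par ^^ m) (par v) = r"
    using reach m by (simp add: funpow_Suc_right del: funpow.simps)
  then have le_m: "depth par r (par v) \<le> m"
    and "(par ^^ depth par r (par v)) (par v) = r"
    unfolding depth_def by (rule Least_le, rule LeastI)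
  then have "(par ^^ Suc (depth par r (par v))) v = r"
    by (simp add: funpow_Suc_right del: funpow.simps)
  then have "depth par r v \<le> Suc (depth par r (par v))"
    unfolding depth_def by (rule Least_le)
  with le_m m show ?thesis by simp
qed

lemma depth_eq_0_iff:
  assumes "rooted_tree par r"
  shows "depth par r v = 0 \<longleftrightarrow> v = r"
  using depth_parent[OF assms, of v] by (cases "v = r") auto

lemma norm_diff_root_le_sum:
  fixes f :: "'v \<Rightarrow> 'a::real_normed_vector"
  assumes tree: "rooted_tree par r"
    and step: "\<And>u. u \<noteq> r \<Longrightarrow> norm (f u - f (par u)) \<le> c (depth par r u)"
  shows "norm (f v - f r) \<le> (\<Sum>i=1..depth par r v. c i)"
proof (induction "depth par r v" arbitrary: v)
  case 0
  then show ?case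
    using depth_eq_0_iff[OF tree] by simp
next
  case (Suc n v)
  then have "v \<noteq> r"
    by (metis depth_root nat.distinct(1))
  then have depth_par: "depth par r (par v) = n"
    using depth_parent[OF tree] Suc.hyps(2) by simp
  have "norm (f v - f r) \<le> norm (f v - f (par v)) + norm (f (par v) - f r)"
    using norm_triangle_ineq[of "f v - f (par v)" "f (par v) - f r"] by simp
  also have "\<dots> \<le> c (Suc n) + (\<Sum>i=1..n. c i)"
    using step[OF \<open>v \<noteq> r\<close>] Suc.hyps depth_par by (intro add_mono) auto
  also have "\<dots> = (\<Sum>i=1..depth par r v. c i)"
    unfolding Suc.hyps(2)[symmetric] by simp
  finally show ?case .
qed

lemma depth_ge_1: "rooted_tree par r \<Longrightarrow> v \<noteq> r \<Longrightarrow> 1 \<le> depth par r v"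
  using depth_parent by fastforce

lemma Lk_increment_le:
  assumes "rooted_tree par r" "f \<in> Lk par r k" "u \<noteq> r"
  shows "cmod (f u - f (par u))
    \<le> (SUP w\<in>{w. w \<noteq> r}. Lweight k (depth par r w) * Df par f w) / Lweight k (depth par r u)"
proof -
  have "Df par f u * Lweight k (depth par r u)
      \<le> (SUP w\<in>{w. w \<noteq> r}. Lweight k (depth par r w) * Df par f w)"
    using assms(2,3) unfolding Lk_def mult.commute[of "Df par f u"] by (intro cSUP_upper) auto
  then show ?thesis
    unfolding Df_def pos_le_divide_eq[OF Lweight_pos[OF depth_ge_1[OF assms(1,3)]]] .
qed

theorem proposition2p2:
  fixes par :: "'v \<Rightarrow> 'v" and r :: 'v and k :: nat and f :: "'v \<Rightarrow> complex" and v :: 'v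
  assumes "rooted_tree par r"
    and "k \<ge> 1"
    and "f \<in> Lk par r k"
    and "v \<noteq> r"
  shows "cmod (f v) \<le> ell k (real (depth par r v)) * Lk_norm par r k f"
proof -
  define M where "M = (SUP u\<in>{u. u \<noteq> r}. Lweight k (depth par r u) * Df par f u)"
  define n where "n = depth par r v"
  have increment_le: "cmod (f u - f (par u)) \<le> M * (1 / Lweight k (depth par r u))"
    if "u \<noteq> r" for u
    using Lk_increment_le[OF assms(1,3) that] unfolding M_def by simp
  have "1 \<le> n"
    using depth_ge_1[OF assms(1,4)] unfolding n_def .
  have "0 \<le> M / Lweight k n"
    using Lk_increment_le[OF assms(1,3,4)] norm_ge_zero[of "f v - f (par v)"]
    unfolding M_def n_def by linarith
  then have "0 \<le> M"
    using Lweight_pos[OF \<open>1 \<le> n\<close>, of k] by (simp add: zero_le_divide_iff)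
  have "1 \<le> ell k (real n)"
    using \<open>1 \<le> n\<close> ell_ge_1 by simp
  have "cmod (f v - f r) \<le> M * (\<Sum>i=1..n. 1 / Lweight k i)"
    using norm_diff_root_le_sum[OF assms(1) increment_le] unfolding n_def
    by (simp add: sum_distrib_left)
  also have "\<dots> \<le> M * ell k (real n)"
    using sum_inverse_Lweight_le_ell[OF assms(2) \<open>1 \<le> n\<close>] \<open>0 \<le> M\<close>
    by (rule mult_left_mono)
  finally have "cmod (f v) \<le> cmod (f r) + M * ell k (real n)"
    using norm_triangle_ineq2[of "f v" "f r"] by simp
  also have "\<dots> \<le> ell k (real n) * (cmod (f r) + M)"
    using mult_left_mono[OF \<open>1 \<le> ell k (real n)\<close> norm_ge_zero[of "f r"]]
    by (simp add: algebra_simps)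
  finally show ?thesis
    unfolding Lk_norm_def M_def n_def .
qed

end
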